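(* For every integer $k\ge 1$, let $B_k$ be the graph with vertex set $\{b^i_j \mid i,j\in\{1,\ldots,k\}\}$ in which $b^i_j$ and $b^{i'}_{j'}$ are adjacent if and only if $i\ne i'$ and $j\ne j'$ (i.e. $B_k$ is the complement of the Cartesian product $K_k\square K_k$). Let $\alpha^k$ and $\beta^k$ be the $k$-colorings of $B_k$ given by $\alpha^k(b^i_j)=i$ and $\beta^k(b^i_j)=j$. Then (1) every recoloring sequence from $\alpha^k$ to $\beta^k$ contains a coloring that uses at least $2k-1$ different colors; and (2) there exists a $(2k-1)$-recoloring sequence from $\alpha^k$ to $\beta^k$ of length at most $2k^2$.
   Context: A $k$-coloring of a graph $G$ is a map $V(G)\to\{1,\ldots,k\}$ with adjacent vertices receiving different colors. The set of colors used by a coloring $\gamma$ is $\{\gamma(v)\mid v\in V(G)\}$. The $k$-color graph $\mathcal{C}_k(G)$ has the $k$-colorings of $G$ as vertices, two being adjacent iff they differ on exactly one vertex. A $k$-recoloring sequence from $\alpha$ to $\beta$ of length $m$ is a sequence $\alpha=\alpha_0,\ldots,\alpha_m=\beta$ of $k$-colorings such that for each $i$, either $\alpha_i=\alpha_{i+1}$ or $\alpha_i,\alpha_{i+1}$ are adjacent in $\mathcal{C}_k(G)$. A recoloring sequence is a $k$-recoloring sequence for some integer $k$. *)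

theory Defs
  imports Main
begin

text \<open>A graph is given by a vertex set V and a symmetric irreflexive adjacency
  relation E. A colouring is a function on vertices; only its values on V matter.\<close>

definition is_kcoloring :: "'v set \<Rightarrow> ('v \<Rightarrow> 'v \<Rightarrow> bool) \<Rightarrow> nat \<Rightarrow> ('v \<Rightarrow> nat) \<Rightarrow> bool" where
  "is_kcoloring V E k c \<longleftrightarrow>
     (\<forall>v\<in>V. c v \<in> {1..k}) \<and> (\<forall>u\<in>V. \<forall>v\<in>V. E u v \<longrightarrow> c u \<noteq> c v)"

definition same_coloring :: "'v set \<Rightarrow> ('v \<Rightarrow> nat) \<Rightarrow> ('v \<Rightarrow> nat) \<Rightarrow> bool" where
  "same_coloring V f g \<longleftrightarrow> (\<forall>v\<in>V. f v = g v)"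

definition differ_on_one :: "'v set \<Rightarrow> ('v \<Rightarrow> nat) \<Rightarrow> ('v \<Rightarrow> nat) \<Rightarrow> bool" where
  "differ_on_one V f g \<longleftrightarrow> (\<exists>!v. v \<in> V \<and> f v \<noteq> g v)"

text \<open>A k-recolouring sequence alpha = xs!0, ..., xs!m = beta; its length is m = length xs - 1.\<close>
definition recoloring_seq ::
  "'v set \<Rightarrow> ('v \<Rightarrow> 'v \<Rightarrow> bool) \<Rightarrow> nat \<Rightarrow> ('v \<Rightarrow> nat) \<Rightarrow> ('v \<Rightarrow> nat) \<Rightarrow> ('v \<Rightarrow> nat) list \<Rightarrow> bool" where
  "recoloring_seq V E k \<alpha> \<beta> xs \<longleftrightarrow>
     xs \<noteq> [] \<and> (\<forall>c\<in>set xs. is_kcoloring V E k c) \<and>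
     same_coloring V (hd xs) \<alpha> \<and> same_coloring V (last xs) \<beta> \<and>
     (\<forall>i. Suc i < length xs \<longrightarrow>
        same_coloring V (xs ! i) (xs ! Suc i) \<or> differ_on_one V (xs ! i) (xs ! Suc i))"

definition colors_used :: "'v set \<Rightarrow> ('v \<Rightarrow> nat) \<Rightarrow> nat" where
  "colors_used V c = card (c ` V)"

text \<open>The graph B_k: vertex b^i_j is the pair (i,j).\<close>
definition B_V :: "nat \<Rightarrow> (nat \<times> nat) set" where
  "B_V k = {1..k} \<times> {1..k}"

definition B_E :: "nat \<times> nat \<Rightarrow> nat \<times> nat \<Rightarrow> bool" where
  "B_E u v \<longleftrightarrow> fst u \<noteq> fst v \<and> snd u \<noteq> snd v"

definition alphaB :: "nat \<times> nat \<Rightarrow> nat" where "alphaB b = fst b"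
definition betaB :: "nat \<times> nat \<Rightarrow> nat" where "betaB b = snd b"

end

theory Submission
  imports Defs
begin

text \<open>
  In a proper colouring of B_k every colour class lies in one row or one column,
  because vertices in different rows and different columns are adjacent. Consider the property
  "every row contains a repeated colour": it holds for alphaB (k \<ge> 2) and fails for betaB, so
  some step c \<rightarrow> d of any recolouring sequence loses it. Two counting bounds then show that c or
  d uses at least 2k - 1 colours: a row and a column without repeats form a rainbow cross, and
  distinct rows/columns with repeated colours have distinct repeated colours.

  A colouring whose colour at (i, j) lies in a row palette A i or a column palette
  S j, all palettes disjoint, is proper, and such colourings are closed under mixing. The
  explicit sequence consists of three phases, each recolouring a set of vertices one at a time
  between two colourings that respect common palettes drawn from 2k - 1 colours.
\<close>

lemma B_V_iff [simp]: "(i, j) \<in> B_V k \<longleftrightarrow> i \<in> {1..k} \<and> j \<in> {1..k}"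
  by (simp add: B_V_def)

lemma same_colour_same_line:
  assumes "is_kcoloring (B_V k) B_E K c" "(a, b) \<in> B_V k" "(a', b') \<in> B_V k"
    and "c (a, b) = c (a', b')"
  shows "a = a' \<or> b = b'"
  using assms unfolding is_kcoloring_def B_E_def by force

definition row_rep :: "nat \<Rightarrow> (nat \<times> nat \<Rightarrow> nat) \<Rightarrow> nat \<Rightarrow> nat \<Rightarrow> bool" where
  "row_rep k c i x \<longleftrightarrow> (\<exists>j1\<in>{1..k}. \<exists>j2\<in>{1..k}. j1 \<noteq> j2 \<and> c (i, j1) = x \<and> c (i, j2) = x)"

definition col_rep :: "nat \<Rightarrow> (nat \<times> nat \<Rightarrow> nat) \<Rightarrow> nat \<Rightarrow> nat \<Rightarrow> bool" where
  "col_rep k c j x \<longleftrightarrow> (\<exists>i1\<in>{1..k}. \<exists>i2\<in>{1..k}. i1 \<noteq> i2 \<and> c (i1, j) = x \<and> c (i2, j) = x)"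

text \<open>A colour repeated in row i occurs nowhere outside row i: a vertex (a, b) with a \<noteq> i
  would have to share a column with both occurrences, which lie in different columns.\<close>

lemma row_rep_class:
  assumes col: "is_kcoloring (B_V k) B_E K c" and i: "i \<in> {1..k}" and rep: "row_rep k c i x"
    and v: "(a, b) \<in> B_V k" "c (a, b) = x"
  shows "a = i"
proof -
  obtain j1 j2 where j: "j1 \<in> {1..k}" "j2 \<in> {1..k}" "j1 \<noteq> j2" "c (i, j1) = x" "c (i, j2) = x"
    using rep unfolding row_rep_def by blast
  have "a = i \<or> b = j1" "a = i \<or> b = j2"
    using same_colour_same_line[OF col v(1)] i j v(2) by auto
  then show ?thesis using j(3) by auto
qed

lemma col_rep_class:
  assumes col: "is_kcoloring (B_V k) B_E K c" and j: "j \<in> {1..k}" and rep: "col_rep k c j x"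
    and v: "(a, b) \<in> B_V k" "c (a, b) = x"
  shows "b = j"
proof -
  obtain i1 i2 where i: "i1 \<in> {1..k}" "i2 \<in> {1..k}" "i1 \<noteq> i2" "c (i1, j) = x" "c (i2, j) = x"
    using rep unfolding col_rep_def by blast
  have "a = i1 \<or> b = j" "a = i2 \<or> b = j"
    using same_colour_same_line[OF col v(1)] i j v(2) by auto
  then show ?thesis using i(3) by auto
qed

text \<open>First counting bound: if row i0 and column j0 contain no repeated colour, the 2k - 1 vertices
  of the cross formed by them receive pairwise distinct colours (off-cross pairs are adjacent).\<close>

lemma colours_from_cross:
  assumes col: "is_kcoloring (B_V k) B_E K c" and i0: "i0 \<in> {1..k}" and j0: "j0 \<in> {1..k}"
    and row: "\<nexists>x. row_rep k c i0 x" and column: "\<nexists>x. col_rep k c j0 x"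
  shows "colors_used (B_V k) c \<ge> 2 * k - 1"
proof -
  define X where "X = {i0} \<times> {1..k} \<union> ({1..k} - {i0}) \<times> {j0}"
  have X: "X \<subseteq> B_V k" using i0 j0 by (auto simp: X_def)
  have inj: "inj_on c X"
  proof (rule inj_onI)
    fix u v assume u: "u \<in> X" and v: "v \<in> X" and eq: "c u = c v"
    obtain a b a' b' where uv: "u = (a, b)" "v = (a', b')" by fastforce
    have in_V: "(a, b) \<in> B_V k" "(a', b') \<in> B_V k" using u v uv X by auto
    have line: "a = a' \<or> b = b'"
      using same_colour_same_line[OF col in_V] eq uv by simp
    have "b = b'" if "a = i0" "a' = i0"
      using row eq in_V uv that unfolding row_rep_def B_V_iff by blast
    moreover have "a = a'" if "b = j0" "b' = j0"
      using column eq in_V uv that unfolding col_rep_def B_V_iff by blast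
    ultimately show "u = v" using line u v uv by (auto simp: X_def)
  qed
  have "2 * k - 1 = card ({i0} \<times> {1..k}) + card (({1..k} - {i0}) \<times> {j0})"
    using i0 by (simp add: card_cartesian_product)
  also have "\<dots> = card X"
    unfolding X_def by (rule card_Un_disjoint[symmetric]) auto
  also have "\<dots> = card (c ` X)" by (rule card_image[OF inj, symmetric])
  also have "\<dots> \<le> colors_used (B_V k) c"
    unfolding colors_used_def using X by (intro card_mono) (auto simp: B_V_def)
  finally show ?thesis .
qed

text \<open>Second counting bound: choosing a repeated colour in each row of R and each column of C gives
  card R + card C distinct colours, since such a colour determines its row or column.\<close>

lemma colours_from_repeats:
  assumes col: "is_kcoloring (B_V k) B_E K c" and R: "R \<subseteq> {1..k}" and C: "C \<subseteq> {1..k}"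
    and rows: "\<forall>i\<in>R. \<exists>x. row_rep k c i x" and cols: "\<forall>j\<in>C. \<exists>x. col_rep k c j x"
  shows "colors_used (B_V k) c \<ge> card R + card C"
proof -
  obtain h where h: "\<forall>i\<in>R. row_rep k c i (h i)" using bchoice[OF rows] by blast
  obtain w where w: "\<forall>j\<in>C. col_rep k c j (w j)" using bchoice[OF cols] by blast
  have inj_h: "inj_on h R"
  proof (rule inj_onI)
    fix i i' assume i: "i \<in> R" "i' \<in> R" and eq: "h i = h i'"
    then obtain j where "j \<in> {1..k}" "c (i, j) = h i'" using h unfolding row_rep_def by metis
    moreover have "i \<in> {1..k}" "i' \<in> {1..k}" using i R by auto
    ultimately show "i = i'" using row_rep_class[OF col, of i' "h i'" i j] h i by simp
  qed
  have inj_w: "inj_on w C"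
  proof (rule inj_onI)
    fix j j' assume j: "j \<in> C" "j' \<in> C" and eq: "w j = w j'"
    then obtain i where "i \<in> {1..k}" "c (i, j) = w j'" using w unfolding col_rep_def by metis
    moreover have "j \<in> {1..k}" "j' \<in> {1..k}" using j C by auto
    ultimately show "j = j'" using col_rep_class[OF col, of j' "w j'" i j] w j by simp
  qed
  have disj: "h ` R \<inter> w ` C = {}"
  proof (rule ccontr)
    assume "h ` R \<inter> w ` C \<noteq> {}"
    then obtain i j where ij: "i \<in> R" "j \<in> C" "h i = w j" by blast
    obtain j1 j2 where j12: "j1 \<in> {1..k}" "j2 \<in> {1..k}" "j1 \<noteq> j2"
      "c (i, j1) = w j" "c (i, j2) = w j"
      using h ij unfolding row_rep_def by metis
    have "i \<in> {1..k}" "j \<in> {1..k}" using ij R C by auto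
    then have "j1 = j" "j2 = j"
      using col_rep_class[OF col, of j "w j"] w ij j12 by auto
    then show False using j12(3) by simp
  qed
  have sub: "h ` R \<union> w ` C \<subseteq> c ` B_V k"
  proof -
    have "h i \<in> c ` B_V k" if "i \<in> R" for i
      using h that R unfolding row_rep_def by (metis B_V_iff image_eqI subsetD)
    moreover have "w j \<in> c ` B_V k" if "j \<in> C" for j
      using w that C unfolding col_rep_def by (metis B_V_iff image_eqI subsetD)
    ultimately show ?thesis by blast
  qed
  have "card R + card C = card (h ` R \<union> w ` C)"
    using disj finite_subset[OF R] finite_subset[OF C]
    by (simp add: card_Un_disjoint card_image[OF inj_h] card_image[OF inj_w])
  also have "\<dots> \<le> colors_used (B_V k) c"
    unfolding colors_used_def by (rule card_mono[OF _ sub]) (simp add: B_V_def)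
  finally show ?thesis .
qed

text \<open>The invariant separating the two endpoint colourings: every row contains a repeated colour.
  It holds for alphaB (when k \<ge> 2) and fails for betaB.\<close>

definition all_rows_repeat :: "nat \<Rightarrow> (nat \<times> nat \<Rightarrow> nat) \<Rightarrow> bool" where
  "all_rows_repeat k c \<longleftrightarrow> (\<forall>i\<in>{1..k}. \<exists>x. row_rep k c i x)"

lemma agree_outside_column:
  assumes "k \<ge> 1" and "same_coloring (B_V k) c d \<or> differ_on_one (B_V k) c d"
  shows "\<exists>q\<in>{1..k}. \<forall>i\<in>{1..k}. \<forall>j\<in>{1..k}. j \<noteq> q \<longrightarrow> c (i, j) = d (i, j)"
  using assms(2)
proof
  assume "same_coloring (B_V k) c d"
  then have "\<forall>i\<in>{1..k}. \<forall>j\<in>{1..k}. c (i, j) = d (i, j)" unfolding same_coloring_def by simp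
  then show ?thesis using assms(1) by (intro bexI[of _ 1]) auto
next
  assume "differ_on_one (B_V k) c d"
  then obtain v where v: "v \<in> B_V k" and uniq: "\<forall>w\<in>B_V k. c w \<noteq> d w \<longrightarrow> w = v"
    unfolding differ_on_one_def by blast
  obtain p q where pq: "v = (p, q)" by (cases v)
  have "\<forall>i\<in>{1..k}. \<forall>j\<in>{1..k}. j \<noteq> q \<longrightarrow> c (i, j) = d (i, j)"
    using uniq pq by auto
  then show ?thesis using v pq by (intro bexI[of _ q]) auto
qed

text \<open>At a step where the invariant is lost, the new colouring d has a
  row without repeats; if d also has a column without repeats, the cross bound applies to d.
  Otherwise all columns of d repeat, hence all columns of c except possibly column q, and all
  rows of c repeat, so the second bound gives k + (k - 1) colours for c.\<close>

lemma colours_at_transition: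
  assumes col_c: "is_kcoloring (B_V k) B_E K c" and col_d: "is_kcoloring (B_V k) B_E K d"
    and before: "all_rows_repeat k c" and after: "\<not> all_rows_repeat k d"
    and q: "q \<in> {1..k}" and agree: "\<forall>i\<in>{1..k}. \<forall>j\<in>{1..k}. j \<noteq> q \<longrightarrow> c (i, j) = d (i, j)"
  shows "colors_used (B_V k) c \<ge> 2 * k - 1 \<or> colors_used (B_V k) d \<ge> 2 * k - 1"
proof -
  obtain i0 where i0: "i0 \<in> {1..k}" "\<nexists>x. row_rep k d i0 x"
    using after unfolding all_rows_repeat_def by blast
  show ?thesis
  proof (cases "\<exists>j0\<in>{1..k}. \<nexists>x. col_rep k d j0 x")
    case True
    then obtain j0 where "j0 \<in> {1..k}" "\<nexists>x. col_rep k d j0 x" by blast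
    then show ?thesis using colours_from_cross[OF col_d i0(1) _ i0(2)] by blast
  next
    case False
    have "\<exists>x. col_rep k c j x" if j: "j \<in> {1..k} - {q}" for j
    proof -
      obtain x i1 i2 where i: "i1 \<in> {1..k}" "i2 \<in> {1..k}" "i1 \<noteq> i2"
        and x: "d (i1, j) = x" "d (i2, j) = x"
        using False j unfolding col_rep_def by blast
      have "c (i1, j) = x" "c (i2, j) = x" using agree i x j by auto
      then show ?thesis using i unfolding col_rep_def by blast
    qed
    then have "colors_used (B_V k) c \<ge> card {1..k} + card ({1..k} - {q})"
      using colours_from_repeats[OF col_c, of "{1..k}" "{1..k} - {q}"] before
      unfolding all_rows_repeat_def by blast
    moreover have "card {1..k} + card ({1..k} - {q}) = 2 * k - 1" using q by simp
    ultimately show ?thesis by linarith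
  qed
qed

lemma list_transition:
  assumes "xs \<noteq> []" "P (hd xs)" "\<not> P (last xs)"
  shows "\<exists>t. Suc t < length xs \<and> P (xs ! t) \<and> \<not> P (xs ! Suc t)"
  using assms
proof (induction xs)
  case Nil
  then show ?case by simp
next
  case (Cons x ys)
  show ?case
  proof (cases "ys \<noteq> [] \<and> P (hd ys)")
    case True
    then obtain t where "Suc t < length ys" "P (ys ! t)" "\<not> P (ys ! Suc t)"
      using Cons.IH Cons.prems(3) by auto
    then show ?thesis by (intro exI[of _ "Suc t"]) auto
  next
    case False
    then show ?thesis using Cons.prems by (intro exI[of _ 0]) (cases ys; auto)
  qed
qed

text \<open>For k = 1 every colouring uses a colour; for k \<ge> 2 we locate the step
  where all_rows_repeat is lost.\<close>

theorem colours_lower_bound: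
  assumes k: "k \<ge> 1" and seq: "recoloring_seq (B_V k) B_E K alphaB betaB xs"
  shows "\<exists>c\<in>set xs. colors_used (B_V k) c \<ge> 2 * k - 1"
proof -
  have ne: "xs \<noteq> []" and cols: "\<forall>c\<in>set xs. is_kcoloring (B_V k) B_E K c"
    and first: "same_coloring (B_V k) (hd xs) alphaB"
    and final: "same_coloring (B_V k) (last xs) betaB"
    and steps: "\<And>t. Suc t < length xs \<Longrightarrow>
      same_coloring (B_V k) (xs ! t) (xs ! Suc t) \<or> differ_on_one (B_V k) (xs ! t) (xs ! Suc t)"
    using seq unfolding recoloring_seq_def by auto
  show ?thesis
  proof (cases "k = 1")
    case True
    have "hd xs ` B_V k \<noteq> {}" "finite (hd xs ` B_V k)" using True by (simp_all add: B_V_def)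
    then have "colors_used (B_V k) (hd xs) \<ge> 1"
      unfolding colors_used_def by (simp add: Suc_le_eq card_gt_0_iff)
    then show ?thesis using True hd_in_set[OF ne] by auto
  next
    case False
    have "all_rows_repeat k (hd xs)"
      unfolding all_rows_repeat_def row_rep_def
    proof
      fix i assume "i \<in> {1..k}"
      then have "hd xs (i, 1) = i" "hd xs (i, 2) = i" "(2::nat) \<in> {1..k}"
        using first k False unfolding same_coloring_def alphaB_def by auto
      then show "\<exists>x. \<exists>j1\<in>{1..k}. \<exists>j2\<in>{1..k}. j1 \<noteq> j2 \<and> hd xs (i, j1) = x \<and> hd xs (i, j2) = x"
        using k by (intro exI bexI[of _ 1] bexI[of _ 2]) auto
    qed
    moreover have "\<not> all_rows_repeat k (last xs)"
    proof
      assume "all_rows_repeat k (last xs)"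
      then have "\<exists>x. row_rep k (last xs) 1 x" using k unfolding all_rows_repeat_def by simp
      then obtain j1 j2 where j: "j1 \<in> {1..k}" "j2 \<in> {1..k}" "j1 \<noteq> j2"
        "last xs (1, j1) = last xs (1, j2)"
        unfolding row_rep_def by blast
      moreover have "last xs (1, j) = j" if "j \<in> {1..k}" for j
        using final k that unfolding same_coloring_def betaB_def by simp
      ultimately show False by simp
    qed
    ultimately obtain t where t: "Suc t < length xs"
      "all_rows_repeat k (xs ! t)" "\<not> all_rows_repeat k (xs ! Suc t)"
      using list_transition[of xs "all_rows_repeat k", OF ne] by blast
    have in_xs: "xs ! t \<in> set xs" "xs ! Suc t \<in> set xs" using t(1) by simp_all
    obtain q where q: "q \<in> {1..k}"
      and agree: "\<forall>i\<in>{1..k}. \<forall>j\<in>{1..k}. j \<noteq> q \<longrightarrow> (xs ! t) (i, j) = (xs ! Suc t) (i, j)"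
      using agree_outside_column[OF k steps[OF t(1)]] by blast
    have "colors_used (B_V k) (xs ! t) \<ge> 2 * k - 1 \<or> colors_used (B_V k) (xs ! Suc t) \<ge> 2 * k - 1"
      using colours_at_transition[OF _ _ t(2,3) q agree] cols in_xs by blast
    then show ?thesis using in_xs by blast
  qed
qed

definition mix :: "'v set \<Rightarrow> ('v \<Rightarrow> nat) \<Rightarrow> ('v \<Rightarrow> nat) \<Rightarrow> 'v \<Rightarrow> nat" where
  "mix Y g c = (\<lambda>v. if v \<in> Y then g v else c v)"

definition phase :: "('v \<Rightarrow> nat) \<Rightarrow> ('v \<Rightarrow> nat) \<Rightarrow> 'v list \<Rightarrow> ('v \<Rightarrow> nat) list" where
  "phase c g vs = map (\<lambda>t. mix (set (take t vs)) g c) [0..<Suc (length vs)]"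

lemma length_phase [simp]: "length (phase c g vs) = Suc (length vs)"
  by (simp add: phase_def)

lemma phase_not_Nil: "phase c g vs \<noteq> []"
  by (simp add: phase_def)

lemma nth_phase: "t \<le> length vs \<Longrightarrow> phase c g vs ! t = mix (set (take t vs)) g c"
  unfolding phase_def by (subst nth_map_upt) auto

lemma phase_step:
  "t < length vs \<Longrightarrow> phase c g vs ! Suc t = (phase c g vs ! t)(vs ! t := g (vs ! t))"
  by (simp add: nth_phase take_Suc_conv_app_nth mix_def fun_eq_iff)

lemma single_recolouring:
  assumes "w \<in> V"
  shows "same_coloring V c (c(w := x)) \<or> differ_on_one V c (c(w := x))"
  using assms by (cases "c w = x") (auto simp: same_coloring_def differ_on_one_def)

lemma phase_recoloring:
  assumes vs: "set vs \<subseteq> V" and proper: "\<forall>Y\<subseteq>set vs. is_kcoloring V E K (mix Y g c)"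
    and fixed: "\<forall>v\<in>V - set vs. g v = c v"
  shows "recoloring_seq V E K c g (phase c g vs)"
  unfolding recoloring_seq_def
proof (intro conjI allI impI ballI)
  show "phase c g vs \<noteq> []" by (rule phase_not_Nil)
  show "is_kcoloring V E K d" if d: "d \<in> set (phase c g vs)" for d
  proof -
    obtain t where "d = mix (set (take t vs)) g c"
      using d by (auto simp: phase_def simp del: upt_Suc)
    then show ?thesis using proper[rule_format, OF set_take_subset] by simp
  qed
  show "same_coloring V (hd (phase c g vs)) c"
    by (simp add: hd_conv_nth[OF phase_not_Nil] nth_phase mix_def same_coloring_def)
  show "same_coloring V (last (phase c g vs)) g"
    using fixed
    by (simp add: last_conv_nth[OF phase_not_Nil] nth_phase mix_def same_coloring_def)
  fix t assume "Suc t < length (phase c g vs)"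
  then have t: "t < length vs" by simp
  then have "vs ! t \<in> V" using vs by auto
  then show "same_coloring V (phase c g vs ! t) (phase c g vs ! Suc t) \<or>
      differ_on_one V (phase c g vs ! t) (phase c g vs ! Suc t)"
    unfolding phase_step[OF t] by (rule single_recolouring)
qed

text \<open>Recolouring sequences can be concatenated; the junction is a step between two colourings
  that both coincide with the common endpoint.\<close>

lemma recoloring_seq_append:
  assumes xs: "recoloring_seq V E K a b xs" and ys: "recoloring_seq V E K b c ys"
  shows "recoloring_seq V E K a c (xs @ ys)"
proof -
  have steps: "same_coloring V (zs ! t) (zs ! Suc t) \<or> differ_on_one V (zs ! t) (zs ! Suc t)"
    if "recoloring_seq V E K p q zs" "Suc t < length zs" for p q zs t
    using that unfolding recoloring_seq_def by blast
  have ne: "xs \<noteq> []" "ys \<noteq> []" and cols: "\<forall>d\<in>set xs \<union> set ys. is_kcoloring V E K d"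
    and ends: "same_coloring V (hd xs) a" "same_coloring V (last xs) b"
      "same_coloring V (hd ys) b" "same_coloring V (last ys) c"
    using xs ys unfolding recoloring_seq_def by auto
  show ?thesis
    unfolding recoloring_seq_def
  proof (intro conjI allI impI)
    show "xs @ ys \<noteq> []" using ne by simp
    show "\<forall>d\<in>set (xs @ ys). is_kcoloring V E K d" using cols by simp
    show "same_coloring V (hd (xs @ ys)) a" using ne ends by simp
    show "same_coloring V (last (xs @ ys)) c" using ne ends by simp
    fix t assume t: "Suc t < length (xs @ ys)"
    consider "Suc t < length xs" | "Suc t = length xs" | "length xs \<le> t" by linarith
    then show "same_coloring V ((xs @ ys) ! t) ((xs @ ys) ! Suc t) \<or>
        differ_on_one V ((xs @ ys) ! t) ((xs @ ys) ! Suc t)"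
    proof cases
      case 1
      then show ?thesis using steps[OF xs 1] by (simp add: nth_append)
    next
      case 2
      then have "t = length xs - 1" by simp
      then have "(xs @ ys) ! t = last xs" "(xs @ ys) ! Suc t = hd ys"
        using 2 ne by (simp_all add: nth_append last_conv_nth hd_conv_nth)
      moreover have "same_coloring V (last xs) (hd ys)"
        using ends unfolding same_coloring_def by simp
      ultimately show ?thesis by simp
    next
      case 3
      define s where "s = t - length xs"
      have s: "t = length xs + s" "Suc s < length ys" using 3 t by (auto simp: s_def)
      show ?thesis using steps[OF ys s(2)] by (simp add: s(1) nth_append)
    qed
  qed
qed

definition disjoint_palettes :: "nat \<Rightarrow> (nat \<Rightarrow> nat set) \<Rightarrow> (nat \<Rightarrow> nat set) \<Rightarrow> bool" where
  "disjoint_palettes k A S \<longleftrightarrow>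
     (\<forall>i\<in>{1..k}. \<forall>i'\<in>{1..k}. i \<noteq> i' \<longrightarrow> A i \<inter> A i' = {}) \<and>
     (\<forall>j\<in>{1..k}. \<forall>j'\<in>{1..k}. j \<noteq> j' \<longrightarrow> S j \<inter> S j' = {}) \<and>
     (\<forall>i\<in>{1..k}. \<forall>j\<in>{1..k}. A i \<inter> S j = {})"

definition uses_palettes ::
  "nat \<Rightarrow> nat \<Rightarrow> (nat \<Rightarrow> nat set) \<Rightarrow> (nat \<Rightarrow> nat set) \<Rightarrow> (nat \<times> nat \<Rightarrow> nat) \<Rightarrow> bool" where
  "uses_palettes k K A S c \<longleftrightarrow> (\<forall>i\<in>{1..k}. \<forall>j\<in>{1..k}. c (i, j) \<in> (A i \<union> S j) \<inter> {1..K})"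

text \<open>Any colouring respecting disjoint palettes is proper: adjacent vertices lie in different rows
  and different columns, hence draw from disjoint palettes.\<close>

lemma palette_coloring:
  assumes disj: "disjoint_palettes k A S" and uses: "uses_palettes k K A S c"
  shows "is_kcoloring (B_V k) B_E K c"
  unfolding is_kcoloring_def
proof (intro conjI ballI impI)
  fix v assume "v \<in> B_V k"
  then show "c v \<in> {1..K}" using uses by (cases v) (auto simp: uses_palettes_def)
next
  fix u v assume u: "u \<in> B_V k" and v: "v \<in> B_V k" and "B_E u v"
  then obtain i j i' j' where uv: "u = (i, j)" "v = (i', j')" "i \<noteq> i'" "j \<noteq> j'"
    by (cases u, cases v) (auto simp: B_E_def)
  have ij: "i \<in> {1..k}" "j \<in> {1..k}" "i' \<in> {1..k}" "j' \<in> {1..k}" using u v uv by auto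
  have "(A i \<union> S j) \<inter> (A i' \<union> S j') = {}"
    using disj ij uv(3,4) unfolding disjoint_palettes_def by blast
  moreover have "c u \<in> A i \<union> S j" "c v \<in> A i' \<union> S j'"
    using uses ij uv(1,2) unfolding uses_palettes_def by auto
  ultimately show "c u \<noteq> c v" by auto
qed

text \<open>Since respecting palettes is preserved under mixing, a phase between two colourings that
  respect the same disjoint palettes is a recolouring sequence.\<close>

lemma palette_phase:
  assumes disj: "disjoint_palettes k A S"
    and c: "uses_palettes k K A S c" and g: "uses_palettes k K A S g"
    and vs: "set vs \<subseteq> B_V k" and fixed: "\<forall>v\<in>B_V k - set vs. g v = c v"
  shows "recoloring_seq (B_V k) B_E K c g (phase c g vs)"
proof (rule phase_recoloring[OF vs _ fixed], intro allI impI)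
  fix Y
  have "uses_palettes k K A S (mix Y g c)"
    using c g by (simp add: uses_palettes_def mix_def)
  then show "is_kcoloring (B_V k) B_E K (mix Y g c)" by (rule palette_coloring[OF disj])
qed

definition row_colour :: "nat \<Rightarrow> nat \<Rightarrow> nat" where
  "row_colour k i = (if i = 1 then 1 else k + i - 1)"

definition gamma1 :: "nat \<Rightarrow> nat \<times> nat \<Rightarrow> nat" where
  "gamma1 k v = row_colour k (fst v)"

definition gamma2 :: "nat \<Rightarrow> nat \<times> nat \<Rightarrow> nat" where
  "gamma2 k v = (if snd v \<ge> 2 then snd v else row_colour k (fst v))"

text \<open>Three phases: recolour rows 2..k to their fresh colours, then columns 2..k to their final
  colours, and finally the vertices (i, 1) with i \<ge> 2 to colour 1.\<close>

definition recolouring_B :: "nat \<Rightarrow> (nat \<times> nat \<Rightarrow> nat) list" where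
  "recolouring_B k =
     phase alphaB (gamma1 k) (List.product [2..<Suc k] [1..<Suc k]) @
     phase (gamma1 k) (gamma2 k) (List.product [1..<Suc k] [2..<Suc k]) @
     phase (gamma2 k) betaB (List.product [2..<Suc k] [1])"

lemma recolouring_phase1:
  assumes "k \<ge> 1"
  shows "recoloring_seq (B_V k) B_E (2 * k - 1) alphaB (gamma1 k)
           (phase alphaB (gamma1 k) (List.product [2..<Suc k] [1..<Suc k]))"
  by (rule palette_phase[where A = "\<lambda>i. {i, row_colour k i}" and S = "\<lambda>_. {}"])
    (use assms in \<open>auto simp: disjoint_palettes_def uses_palettes_def row_colour_def
       gamma1_def alphaB_def\<close>)

lemma recolouring_phase2:
  assumes "k \<ge> 1"
  shows "recoloring_seq (B_V k) B_E (2 * k - 1) (gamma1 k) (gamma2 k)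
           (phase (gamma1 k) (gamma2 k) (List.product [1..<Suc k] [2..<Suc k]))"
  by (rule palette_phase[where A = "\<lambda>i. {row_colour k i}" and S = "\<lambda>j. {j} - {1}"])
    (use assms in \<open>auto simp: disjoint_palettes_def uses_palettes_def row_colour_def
       gamma1_def gamma2_def\<close>)

lemma recolouring_phase3:
  assumes "k \<ge> 1"
  shows "recoloring_seq (B_V k) B_E (2 * k - 1) (gamma2 k) betaB
           (phase (gamma2 k) betaB (List.product [2..<Suc k] [1]))"
  by (rule palette_phase[where A = "\<lambda>i. {row_colour k i} - {1}" and S = "\<lambda>j. {j}"])
    (use assms in \<open>auto simp: disjoint_palettes_def uses_palettes_def row_colour_def
       gamma2_def betaB_def\<close>)

text \<open>Part (2): the three phases give a (2k-1)-recolouring sequence of length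
  (k-1)k + k(k-1) + (k-1) + 2 = 2k^2 - k + 1 \<le> 2k^2 (the two junctions are idle steps).\<close>

theorem short_recolouring:
  assumes k: "k \<ge> 1"
  shows "recoloring_seq (B_V k) B_E (2 * k - 1) alphaB betaB (recolouring_B k)"
    and "length (recolouring_B k) - 1 \<le> 2 * k ^ 2"
proof -
  show "recoloring_seq (B_V k) B_E (2 * k - 1) alphaB betaB (recolouring_B k)"
    unfolding recolouring_B_def
    using recolouring_phase1[OF k] recolouring_phase2[OF k] recolouring_phase3[OF k]
    by (intro recoloring_seq_append)
  obtain m where m: "k = Suc m" using k by (cases k) auto
  have "length [2..<Suc k] = m" "length [1..<Suc k] = k" using m by (simp_all del: upt_Suc)
  then have "length (recolouring_B k) - 1 = m * k + k * m + m + 2"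
    by (simp add: recolouring_B_def length_product del: upt_Suc)
  also have "\<dots> \<le> 2 * k ^ 2" by (simp add: m power2_eq_square algebra_simps)
  finally show "length (recolouring_B k) - 1 \<le> 2 * k ^ 2" .
qed

theorem mainTheorem1:
  fixes k :: nat
  assumes "k \<ge> 1"
  shows "(\<forall>k' xs. recoloring_seq (B_V k) B_E k' alphaB betaB xs \<longrightarrow>
            (\<exists>c\<in>set xs. colors_used (B_V k) c \<ge> 2 * k - 1))
       \<and> (\<exists>xs. recoloring_seq (B_V k) B_E (2 * k - 1) alphaB betaB xs \<and>
            length xs - 1 \<le> 2 * k ^ 2)"
  using colours_lower_bound[OF assms] short_recolouring[OF assms] by blast

end
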